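(* Let $(X,d^\star)$ be a $\star$-metric space and $A\subseteq X$. Then the closure of $A$ in $(X,\mathscr{T}_{d^\star})$ equals $\{x\in X: D(A,x)=0\}$.
   Context: A $t$-definer is a function $\star:[0,\infty)\times[0,\infty)\to[0,\infty)$ such that for all $a,b,c\ge 0$: $a\star b=b\star a$; $a\star(b\star c)=(a\star b)\star c$; if $a\le b$ then $a\star c\le b\star c$; $a\star 0=a$; and $\star$ is continuous in its first variable with respect to the Euclidean topology. Given a nonempty set $X$ and a $t$-definer $\star$, a $\star$-metric on $X$ is a function $d^\star:X\times X\to[0,\infty)$ such that for all $x,y,z\in X$: $d^\star(x,y)=0$ iff $x=y$; $d^\star(x,y)=d^\star(y,x)$; and $d^\star(x,y)\le d^\star(x,z)\star d^\star(z,y)$. Put $B_{d^\star}(a,r)=\{x\in X: d^\star(a,x)<r\}$ and let $\mathscr{T}_{d^\star}$ be the topology consisting of all $U\subseteq X$ such that for each $a\in U$ some $B_{d^\star}(a,r)$, $r>0$, is contained in $U$. The distance from a point to a set is $D(A,x)=D(x,A)=\inf_{y\in A}d^\star(x,y)$ if $A\ne\emptyset$, and $D(\emptyset,x)=1$. *)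

theory Defs
  imports "HOL-Analysis.Analysis"
begin

definition t_definer :: "(real \<Rightarrow> real \<Rightarrow> real) \<Rightarrow> bool" where
  "t_definer s \<longleftrightarrow>
     (\<forall>a\<ge>0. \<forall>b\<ge>0. s a b \<ge> 0) \<and>
     (\<forall>a\<ge>0. \<forall>b\<ge>0. s a b = s b a) \<and>
     (\<forall>a\<ge>0. \<forall>b\<ge>0. \<forall>c\<ge>0. s a (s b c) = s (s a b) c) \<and>
     (\<forall>a\<ge>0. \<forall>b\<ge>0. \<forall>c\<ge>0. a \<le> b \<longrightarrow> s a c \<le> s b c) \<and>
     (\<forall>a\<ge>0. s a 0 = a) \<and>
     (\<forall>c\<ge>0. continuous_on {0..} (\<lambda>a. s a c))"

definition star_metric :: "(real \<Rightarrow> real \<Rightarrow> real) \<Rightarrow> 'a set \<Rightarrow> ('a \<Rightarrow> 'a \<Rightarrow> real) \<Rightarrow> bool" where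
  "star_metric s X d \<longleftrightarrow>
     (\<forall>x\<in>X. \<forall>y\<in>X. d x y \<ge> 0) \<and>
     (\<forall>x\<in>X. \<forall>y\<in>X. d x y = 0 \<longleftrightarrow> x = y) \<and>
     (\<forall>x\<in>X. \<forall>y\<in>X. d x y = d y x) \<and>
     (\<forall>x\<in>X. \<forall>y\<in>X. \<forall>z\<in>X. d x y \<le> s (d x z) (d z y))"

definition star_ball :: "'a set \<Rightarrow> ('a \<Rightarrow> 'a \<Rightarrow> real) \<Rightarrow> 'a \<Rightarrow> real \<Rightarrow> 'a set" where
  "star_ball X d a r = {x\<in>X. d a x < r}"

definition star_topology :: "'a set \<Rightarrow> ('a \<Rightarrow> 'a \<Rightarrow> real) \<Rightarrow> 'a topology" where
  "star_topology X d = topology (\<lambda>U. U \<subseteq> X \<and> (\<forall>a\<in>U. \<exists>r>0. star_ball X d a r \<subseteq> U))"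

definition star_dist_set :: "('a \<Rightarrow> 'a \<Rightarrow> real) \<Rightarrow> 'a set \<Rightarrow> 'a \<Rightarrow> real" where
  "star_dist_set d A x = (if A = {} then 1 else (INF y\<in>A. d x y))"

end

theory Submission
  imports Defs
begin

text \<open>Continuity of the t-definer in its first variable at 0, together with the
  identity 0 \<star> a = a, makes every \<star>-ball open; the balls therefore form a
  neighbourhood base, so x lies in the closure of A iff every ball around x meets A,
  which is exactly the statement that the infimum of the distances from x to A is 0.\<close>

lemma istopology_star_open:
  "istopology (\<lambda>U. U \<subseteq> X \<and> (\<forall>a\<in>U. \<exists>r>0. star_ball X d a r \<subseteq> U))"
  unfolding istopology_def
proof (rule conjI; intro allI impI)
  fix S T
  assume S: "S \<subseteq> X \<and> (\<forall>a\<in>S. \<exists>r>0. star_ball X d a r \<subseteq> S)"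
    and T: "T \<subseteq> X \<and> (\<forall>a\<in>T. \<exists>r>0. star_ball X d a r \<subseteq> T)"
  show "S \<inter> T \<subseteq> X \<and> (\<forall>a\<in>S \<inter> T. \<exists>r>0. star_ball X d a r \<subseteq> S \<inter> T)"
  proof (intro conjI ballI)
    fix a assume "a \<in> S \<inter> T"
    then obtain r1 r2 where "r1 > 0" "star_ball X d a r1 \<subseteq> S" "r2 > 0" "star_ball X d a r2 \<subseteq> T"
      using S T by blast
    then show "\<exists>r>0. star_ball X d a r \<subseteq> S \<inter> T"
      by (intro exI[of _ "min r1 r2"]) (auto simp: star_ball_def)
  qed (use S in blast)
next
  fix K
  assume K: "\<forall>k\<in>K. k \<subseteq> X \<and> (\<forall>a\<in>k. \<exists>r>0. star_ball X d a r \<subseteq> k)"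
  show "\<Union>K \<subseteq> X \<and> (\<forall>a\<in>\<Union>K. \<exists>r>0. star_ball X d a r \<subseteq> \<Union>K)"
  proof (intro conjI ballI)
    fix a assume "a \<in> \<Union>K"
    then obtain k where k: "k \<in> K" "a \<in> k" by auto
    then obtain r where "r > 0" "star_ball X d a r \<subseteq> k"
      using K by meson
    with k show "\<exists>r>0. star_ball X d a r \<subseteq> \<Union>K" by auto
  qed (use K in auto)
qed

lemma openin_star_topology:
  "openin (star_topology X d) U \<longleftrightarrow> U \<subseteq> X \<and> (\<forall>a\<in>U. \<exists>r>0. star_ball X d a r \<subseteq> U)"
  unfolding star_topology_def using istopology_star_open[of X d] by simp

lemma topspace_star_topology: "topspace (star_topology X d) = X"
proof -
  have "openin (star_topology X d) X"
    by (auto simp: openin_star_topology star_ball_def intro: exI[of _ 1])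
  then show ?thesis
    unfolding topspace_def by (auto simp: openin_star_topology)
qed

lemma t_definer_less_near_zero:
  assumes "t_definer s" and "0 \<le> a" and "a < r"
  obtains \<delta> where "\<delta> > 0" and "\<And>t. 0 \<le> t \<Longrightarrow> t < \<delta> \<Longrightarrow> s t a < r"
proof -
  have s0: "s 0 a = a"
    using assms(1,2) unfolding t_definer_def by (metis order_refl)
  have "continuous_on {0..} (\<lambda>t. s t a)"
    using assms(1,2) by (auto simp: t_definer_def)
  then have "((\<lambda>t. s t a) \<longlongrightarrow> a) (at 0 within {0..})"
    using s0 by (metis atLeast_iff continuous_on_def order_refl)
  then have "\<forall>\<^sub>F t in at 0 within {0..}. s t a < r"
    using assms(3) by (rule order_tendstoD)
  then obtain \<delta> where "\<delta> > 0" and \<delta>: "\<And>t. t \<in> {0..} \<Longrightarrow> t \<noteq> 0 \<Longrightarrow> dist t 0 < \<delta> \<Longrightarrow> s t a < r"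
    unfolding eventually_at by blast
  show thesis
  proof (rule that[OF \<open>\<delta> > 0\<close>])
    fix t :: real assume "0 \<le> t" "t < \<delta>"
    then show "s t a < r"
      using \<delta>[of t] s0 assms(3) by (cases "t = 0") auto
  qed
qed

lemma openin_star_ball:
  assumes ts: "t_definer s" and sm: "star_metric s X d" and x: "x \<in> X"
  shows "openin (star_topology X d) (star_ball X d x r)"
  unfolding openin_star_topology
proof (intro conjI ballI)
  fix y assume "y \<in> star_ball X d x r"
  then have y: "y \<in> X" and "d x y < r"
    by (auto simp: star_ball_def)
  moreover have dxy: "0 \<le> d x y"
    using sm x y by (auto simp: star_metric_def)
  ultimately obtain \<delta> where "\<delta> > 0" and \<delta>: "\<And>t. 0 \<le> t \<Longrightarrow> t < \<delta> \<Longrightarrow> s t (d x y) < r"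
    using t_definer_less_near_zero[OF ts] by metis
  have "star_ball X d y \<delta> \<subseteq> star_ball X d x r"
  proof
    fix z assume "z \<in> star_ball X d y \<delta>"
    then have z: "z \<in> X" and "d y z < \<delta>"
      by (auto simp: star_ball_def)
    have dyz: "0 \<le> d y z"
      using sm y z by (auto simp: star_metric_def)
    have "d x z \<le> s (d x y) (d y z)"
      using sm x y z by (auto simp: star_metric_def)
    also have "\<dots> = s (d y z) (d x y)"
      using ts dxy dyz unfolding t_definer_def by simp
    also have "\<dots> < r"
      using \<delta>[OF dyz \<open>d y z < \<delta>\<close>] .
    finally show "z \<in> star_ball X d x r"
      using z by (simp add: star_ball_def)
  qed
  with \<open>\<delta> > 0\<close> show "\<exists>\<delta>>0. star_ball X d y \<delta> \<subseteq> star_ball X d x r"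
    by blast
qed (auto simp: star_ball_def)

lemma in_star_closure_iff:
  assumes "t_definer s" and sm: "star_metric s X d" and "A \<subseteq> X" and x: "x \<in> X"
  shows "x \<in> star_topology X d closure_of A \<longleftrightarrow> (\<forall>r>0. \<exists>y\<in>A. d x y < r)"
proof
  assume closure: "x \<in> star_topology X d closure_of A"
  show "\<forall>r>0. \<exists>y\<in>A. d x y < r"
  proof (intro allI impI)
    fix r :: real assume "r > 0"
    moreover have "d x x = 0"
      using sm x by (simp add: star_metric_def)
    ultimately have "x \<in> star_ball X d x r"
      using x by (simp add: star_ball_def)
    then obtain y where "y \<in> A" "y \<in> star_ball X d x r"
      using closure openin_star_ball[OF assms(1,2) x] unfolding in_closure_of by meson
    then show "\<exists>y\<in>A. d x y < r"
      by (auto simp: star_ball_def)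
  qed
next
  assume near: "\<forall>r>0. \<exists>y\<in>A. d x y < r"
  show "x \<in> star_topology X d closure_of A"
    unfolding in_closure_of topspace_star_topology
  proof (intro conjI allI impI x)
    fix T assume "x \<in> T \<and> openin (star_topology X d) T"
    then obtain r where "r > 0" "star_ball X d x r \<subseteq> T"
      unfolding openin_star_topology by blast
    moreover obtain y where "y \<in> A" "d x y < r"
      using near \<open>r > 0\<close> by blast
    ultimately show "\<exists>y. y \<in> A \<and> y \<in> T"
      using \<open>A \<subseteq> X\<close> by (auto simp: star_ball_def)
  qed
qed

text \<open>For A = {} both sides are false, thanks to the convention D({}, x) = 1.\<close>

lemma star_dist_set_eq_0_iff:
  assumes "\<And>y. y \<in> A \<Longrightarrow> 0 \<le> d x y"
  shows "star_dist_set d A x = 0 \<longleftrightarrow> (\<forall>r>0. \<exists>y\<in>A. d x y < r)"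
proof (cases "A = {}")
  case False
  have bdd: "bdd_below ((\<lambda>y. d x y) ` A)"
    unfolding bdd_below_def using assms by auto
  have nonneg: "0 \<le> (INF y\<in>A. d x y)"
    using False assms by (rule cINF_greatest)
  have "(INF y\<in>A. d x y) = 0 \<longleftrightarrow> (\<forall>r>0. (INF y\<in>A. d x y) < r)"
    using nonneg by (metis less_eq_real_def not_less_iff_gr_or_eq)
  also have "\<dots> \<longleftrightarrow> (\<forall>r>0. \<exists>y\<in>A. d x y < r)"
    using False bdd by (simp add: cINF_less_iff)
  finally show ?thesis
    using False by (simp add: star_dist_set_def)
qed (auto simp: star_dist_set_def intro: exI[of _ 1])

theorem proposition4p7:
  fixes s :: "real \<Rightarrow> real \<Rightarrow> real" and X :: "'a set" and d :: "'a \<Rightarrow> 'a \<Rightarrow> real"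
    and A :: "'a set"
  assumes "t_definer s" and "star_metric s X d" and "A \<subseteq> X"
  shows "(star_topology X d) closure_of A = {x\<in>X. star_dist_set d A x = 0}"
proof (intro set_eqI)
  fix x
  show "x \<in> star_topology X d closure_of A \<longleftrightarrow> x \<in> {x\<in>X. star_dist_set d A x = 0}"
  proof (cases "x \<in> X")
    case True
    then have "\<And>y. y \<in> A \<Longrightarrow> 0 \<le> d x y"
      using assms(2,3) by (auto simp: star_metric_def)
    then show ?thesis
      using in_star_closure_iff[OF assms True] star_dist_set_eq_0_iff[of A d x] True by simp
  next
    case False
    then show ?thesis
      using closure_of_subset_topspace topspace_star_topology by fastforce
  qed
qed

end
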